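(* Let $F=(X,Y,Z)\colon\mathbb{D}_1\to\mathbb{C}^3$ be a bounded null holomorphic immersion with complete induced metric such that $1<|X|<2$ and $|Y|<1/3$ on $\mathbb{D}_1$. Let $W(z):=-\int_0^z Y\,dX$ and $$\mathcal{L}:=\begin{pmatrix}e^{-W}&Ye^{W}\\ Xe^{-W}&(1+XY)e^{W}\end{pmatrix},$$ so that $\mathcal{L}^{-1}d\mathcal{L}=\begin{pmatrix}0&\theta\\ \omega&0\end{pmatrix}$ with $\omega=e^{-2W}dX$, $\theta=e^{2W}(dY-Y^2dX)$. Then the metric $ds^2_{\mathcal L}=|\omega|^2+|\theta|^2$ is complete on $\mathbb{D}_1$; i.e., the flat front $f=\mathcal{L}\mathcal{L}^*\colon\mathbb{D}_1\to H^3$ is weakly complete.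
   Context: $\mathbb{D}_1$ is the open unit disk; null means $F_z\cdot F_z\equiv 0$ for the complex bilinear dot product on $\mathbb{C}^3$. $H^3=\{aa^*: a\in\mathrm{SL}(2,\mathbb{C})\}$. A flat front $f=\mathcal{L}\mathcal{L}^*$ with holomorphic Legendrian lift $\mathcal{L}$ is weakly complete if $|\omega|^2+|\theta|^2$ is a complete Riemannian metric on $\mathbb{D}_1$. *)

theory Defs
  imports "HOL-Analysis.Analysis"
begin

text \<open>A conformal metric rho(z)|dz| on the open unit disk is complete iff every
  divergent C^1 path gamma : [0,1) -> D_1 (i.e. |gamma(t)| -> 1 as t -> 1, equivalently
  gamma leaves every compact subset of D_1) has infinite length.\<close>
definition complete_disk_metric :: "(complex \<Rightarrow> real) \<Rightarrow> bool" where
  "complete_disk_metric \<rho> \<longleftrightarrow>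
     (\<forall>\<gamma> \<gamma>'.
        (\<forall>t\<in>{0..<1}. (\<gamma> has_vector_derivative \<gamma>' t) (at t within {0..<1::real})) \<and>
        continuous_on {0..<1} \<gamma>' \<and>
        \<gamma> ` {0..<1} \<subseteq> ball 0 1 \<and>
        ((\<lambda>t. norm (\<gamma> t)) \<longlongrightarrow> 1) (at_left 1)
        \<longrightarrow> (\<integral>\<^sup>+ t. ennreal (\<rho> (\<gamma> t) * norm (\<gamma>' t)) * indicator {0..<1} t \<partial>lborel) = \<infinity>)"

definition holo_map3 :: "(complex \<Rightarrow> complex) \<Rightarrow> (complex \<Rightarrow> complex) \<Rightarrow> (complex \<Rightarrow> complex) \<Rightarrow> bool" where
  "holo_map3 X Y Z \<longleftrightarrow> X holomorphic_on ball 0 1 \<and> Y holomorphic_on ball 0 1 \<and> Z holomorphic_on ball 0 1"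

definition null_map3 where
  "null_map3 X Y Z \<longleftrightarrow> (\<forall>z\<in>ball 0 1. (deriv X z)\<^sup>2 + (deriv Y z)\<^sup>2 + (deriv Z z)\<^sup>2 = 0)"

definition immersion_map3 where
  "immersion_map3 X Y Z \<longleftrightarrow> (\<forall>z\<in>ball 0 1. (deriv X z, deriv Y z, deriv Z z) \<noteq> (0,0,0))"

definition induced_density3 where
  "induced_density3 X Y Z z = sqrt ((cmod (deriv X z))\<^sup>2 + (cmod (deriv Y z))\<^sup>2 + (cmod (deriv Z z))\<^sup>2)"

text \<open>Flat front f = L L^* with holomorphic Legendrian lift L = ((a,b),(c,d)):
  L^{-1} dL = ((0,theta),(omega,0)); omega is the (2,1) entry, theta the (1,2) entry of
  L^{-1} L' dz, where L^{-1} = (1/det L) ((d,-b),(-c,a)).\<close>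
definition lift_omega :: "(complex \<Rightarrow> complex) \<Rightarrow> (complex \<Rightarrow> complex) \<Rightarrow> (complex \<Rightarrow> complex) \<Rightarrow> (complex \<Rightarrow> complex) \<Rightarrow> complex \<Rightarrow> complex" where
  "lift_omega a b c d z = (a z * deriv c z - c z * deriv a z) / (a z * d z - b z * c z)"

definition lift_theta :: "(complex \<Rightarrow> complex) \<Rightarrow> (complex \<Rightarrow> complex) \<Rightarrow> (complex \<Rightarrow> complex) \<Rightarrow> (complex \<Rightarrow> complex) \<Rightarrow> complex \<Rightarrow> complex" where
  "lift_theta a b c d z = (d z * deriv b z - b z * deriv d z) / (a z * d z - b z * c z)"

definition weakly_complete_front where
  "weakly_complete_front a b c d \<longleftrightarrow>
     complete_disk_metric (\<lambda>z. sqrt ((cmod (lift_omega a b c d z))\<^sup>2 + (cmod (lift_theta a b c d z))\<^sup>2))"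

end

theory Submission
  imports Defs "HOL-Complex_Analysis.Complex_Analysis"
begin

text \<open>The second row (c, d) = (X e^(-W), (1 + XY) e^W) of the lift solves the linear system
  dc = d \<omega>, dd = c \<theta>. By Gronwall's inequality, |c|^2 + |d|^2 therefore stays bounded along
  every path of finite length for |\<omega>|^2 + |\<theta>|^2. Since |X| > 1 and |1 + XY| \<ge> 1/3, such a
  bound confines e^(2 Re W) to [1/M, 9M], and with the nullity of F this bounds the induced density
  |F_z| by a multiple of the lift density along the path. A divergent path of finite lift length
  would thus have finite length for the complete induced metric.\<close>

lemma has_real_derivative_cmod_power2:
  fixes f :: "real \<Rightarrow> complex"
  assumes "(f has_vector_derivative f') (at x)"
  shows "((\<lambda>s. (cmod (f s))\<^sup>2) has_real_derivative 2 * Re (f' * cnj (f x))) (at x)"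
proof -
  have "((\<lambda>s. f s * cnj (f s)) has_vector_derivative f x * cnj f' + f' * cnj (f x)) (at x)"
    by (rule has_vector_derivative_mult[OF assms has_vector_derivative_cnj[OF assms]])
  then have "((\<lambda>s. Re (f s * cnj (f s))) has_real_derivative Re (f x * cnj f' + f' * cnj (f x))) (at x)"
    unfolding has_vector_derivative_complex_iff by blast
  moreover have "(\<lambda>s. Re (f s * cnj (f s))) = (\<lambda>s. (cmod (f s))\<^sup>2)"
    by (auto simp: fun_eq_iff complex_norm_square[symmetric])
  moreover have "Re (f x * cnj f' + f' * cnj (f x)) = 2 * Re (f' * cnj (f x))"
    by simp
  ultimately show ?thesis
    by simp
qed

lemma gronwall_inequality:
  fixes N g :: "real \<Rightarrow> real"
  assumes "0 \<le> t" and N_cont: "continuous_on {0..t} N" and g_cont: "continuous_on {0..t} g"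
    and N_deriv: "\<And>x. 0 < x \<Longrightarrow> x < t \<Longrightarrow> \<exists>N'. (N has_real_derivative N') (at x) \<and> N' \<le> N x * g x"
  shows "N t \<le> N 0 * exp (integral {0..t} g)"
proof -
  define G where "G s = integral {0..s} g" for s
  define h where "h s = N s * exp (- G s)" for s
  have g_int: "g integrable_on {0..t}"
    by (rule integrable_continuous_interval[OF g_cont])
  have "h t \<le> h 0"
  proof (rule DERIV_nonpos_imp_decreasing_open[OF \<open>0 \<le> t\<close>])
    show "continuous_on {0..t} h"
      unfolding h_def G_def
      by (intro continuous_intros N_cont indefinite_integral_continuous_1[OF g_int])
    fix x assume x: "0 < x" "x < t"
    obtain N' where N': "(N has_real_derivative N') (at x)" "N' \<le> N x * g x"
      using N_deriv[OF x] by blast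
    have "(G has_vector_derivative g x) (at x within {0..t})"
      unfolding G_def by (rule integral_has_vector_derivative[OF g_cont]) (use x in auto)
    moreover have "at x within {0..t} = at x"
      by (rule at_within_interior) (use x in auto)
    ultimately have "(G has_real_derivative g x) (at x)"
      by (simp add: has_real_derivative_iff_has_vector_derivative)
    then have "(h has_real_derivative N' * exp (- G x) - N x * (exp (- G x) * g x)) (at x)"
      unfolding h_def using N'(1) by (auto intro!: derivative_eq_intros)
    moreover have "N' * exp (- G x) - N x * (exp (- G x) * g x) = (N' - N x * g x) * exp (- G x)"
      by (simp add: algebra_simps)
    moreover have "\<dots> \<le> 0"
      using N'(2) by (simp add: mult_nonpos_nonneg)
    ultimately show "\<exists>y. (h has_real_derivative y) (at x) \<and> y \<le> 0"
      by auto
  qed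
  then show ?thesis
    unfolding h_def G_def by (simp add: exp_minus field_simps)
qed

lemma energy_derivative_bound:
  fixes C D C' D' :: complex and g :: real
  assumes "0 \<le> g" and C': "cmod C' \<le> cmod D * g" and D': "cmod D' \<le> cmod C * g"
  shows "2 * Re (C' * cnj C) + 2 * Re (D' * cnj D) \<le> ((cmod C)\<^sup>2 + (cmod D)\<^sup>2) * (2 * g)"
proof -
  have "Re (C' * cnj C) \<le> cmod C * cmod C'"
    using complex_Re_le_cmod[of "C' * cnj C"] by (simp add: norm_mult mult.commute)
  also have "\<dots> \<le> cmod C * (cmod D * g)"
    by (intro mult_left_mono C') simp
  finally have 1: "Re (C' * cnj C) \<le> cmod C * cmod D * g"
    by (simp add: mult.assoc)
  have "Re (D' * cnj D) \<le> cmod D * cmod D'"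
    using complex_Re_le_cmod[of "D' * cnj D"] by (simp add: norm_mult mult.commute)
  also have "\<dots> \<le> cmod D * (cmod C * g)"
    by (intro mult_left_mono D') simp
  finally have 2: "Re (D' * cnj D) \<le> cmod C * cmod D * g"
    by (simp add: algebra_simps)
  have "2 * cmod C * cmod D \<le> (cmod C)\<^sup>2 + (cmod D)\<^sup>2"
    using zero_le_power2[of "cmod C - cmod D"] unfolding power2_diff by linarith
  then have "(2 * (2 * cmod C * cmod D)) * g \<le> (2 * ((cmod C)\<^sup>2 + (cmod D)\<^sup>2)) * g"
    by (intro mult_right_mono \<open>0 \<le> g\<close>) simp
  with 1 2 show ?thesis
    by (simp add: algebra_simps)
qed

lemma integral_le_nn_integral_atLeastLessThan:
  fixes g :: "real \<Rightarrow> real"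
  assumes g_cont: "continuous_on {a..<b} g" and g_nonneg: "\<And>s. s \<in> {a..<b} \<Longrightarrow> 0 \<le> g s"
    and t: "t \<in> {a..<b}"
  shows "ennreal (integral {a..t} g) \<le> (\<integral>\<^sup>+ s. ennreal (g s) * indicator {a..<b} s \<partial>lborel)"
proof -
  have sub: "{a..t} \<subseteq> {a..<b}"
    using t by auto
  have I: "(g has_integral integral {a..t} g) {a..t}"
    using integrable_continuous_interval[OF continuous_on_subset[OF g_cont sub]]
    by (simp add: integrable_integral)
  have "(\<integral>\<^sup>+ s. ennreal (g s) * indicator {a..t} s \<partial>lborel) = ennreal (integral {a..t} g)"
    by (rule nn_integral_has_integral_lebesgue'[OF _ I]) (use g_nonneg sub in auto)
  moreover have "(\<integral>\<^sup>+ s. ennreal (g s) * indicator {a..t} s \<partial>lborel)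
      \<le> (\<integral>\<^sup>+ s. ennreal (g s) * indicator {a..<b} s \<partial>lborel)"
    by (intro nn_integral_mono) (use sub in \<open>auto split: split_indicator\<close>)
  ultimately show ?thesis
    by simp
qed

lemma borel_measurable_ennreal_indicator_atLeastLessThan:
  fixes g :: "real \<Rightarrow> real"
  assumes "continuous_on {a..<b} g"
  shows "(\<lambda>t. ennreal (g t) * indicator {a..<b} t) \<in> borel_measurable lborel"
proof -
  have "(\<lambda>t. indicator {a..<b} t *\<^sub>R g t) \<in> borel_measurable borel"
    by (rule borel_measurable_continuous_on_indicator) (use assms in auto)
  then have "(\<lambda>t. ennreal (indicator {a..<b} t *\<^sub>R g t)) \<in> borel_measurable lborel"
    by measurable
  moreover have "(\<lambda>t. ennreal (indicator {a..<b} t *\<^sub>R g t)) = (\<lambda>t. ennreal (g t) * indicator {a..<b} t)"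
    by (auto simp: fun_eq_iff split: split_indicator)
  ultimately show ?thesis
    by simp
qed

definition disk_path :: "(real \<Rightarrow> complex) \<Rightarrow> (real \<Rightarrow> complex) \<Rightarrow> bool" where
  "disk_path \<gamma> \<gamma>' \<longleftrightarrow>
     (\<forall>t\<in>{0..<1}. (\<gamma> has_vector_derivative \<gamma>' t) (at t within {0..<1})) \<and>
     continuous_on {0..<1} \<gamma>' \<and> \<gamma> ` {0..<1} \<subseteq> ball 0 1"

definition disk_path_length :: "(complex \<Rightarrow> real) \<Rightarrow> (real \<Rightarrow> complex) \<Rightarrow> (real \<Rightarrow> complex) \<Rightarrow> ennreal" where
  "disk_path_length \<rho> \<gamma> \<gamma>' = (\<integral>\<^sup>+ t. ennreal (\<rho> (\<gamma> t) * norm (\<gamma>' t)) * indicator {0..<1} t \<partial>lborel)"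

lemma complete_disk_metric_iff_disk_path:
  "complete_disk_metric \<rho> \<longleftrightarrow>
     (\<forall>\<gamma> \<gamma>'. disk_path \<gamma> \<gamma>' \<and> ((\<lambda>t. norm (\<gamma> t)) \<longlongrightarrow> 1) (at_left 1)
        \<longrightarrow> disk_path_length \<rho> \<gamma> \<gamma>' = \<infinity>)"
  by (simp add: complete_disk_metric_def disk_path_def disk_path_length_def)

lemma disk_path_in_ball: "disk_path \<gamma> \<gamma>' \<Longrightarrow> t \<in> {0..<1} \<Longrightarrow> \<gamma> t \<in> ball 0 1"
  unfolding disk_path_def by blast

lemma disk_path_continuous_on: "disk_path \<gamma> \<gamma>' \<Longrightarrow> continuous_on {0..<1} \<gamma>"
  unfolding disk_path_def by (intro continuous_on_vector_derivative) auto

lemma disk_path_has_vector_derivative_at: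
  assumes "disk_path \<gamma> \<gamma>'" and "t \<in> {0<..<1}"
  shows "(\<gamma> has_vector_derivative \<gamma>' t) (at t)"
proof -
  have "(\<gamma> has_vector_derivative \<gamma>' t) (at t within {0..<1})"
    using assms unfolding disk_path_def by auto
  moreover have "at t within {0..<1} = at t"
    by (rule at_within_interior) (use assms(2) in auto)
  ultimately show ?thesis
    by simp
qed

lemma continuous_on_disk_path_speed:
  assumes "disk_path \<gamma> \<gamma>'" and "continuous_on (ball 0 1) \<rho>"
  shows "continuous_on {0..<1} (\<lambda>t. \<rho> (\<gamma> t) * norm (\<gamma>' t))"
  using assms disk_path_continuous_on[OF assms(1)] unfolding disk_path_def
  by (intro continuous_intros continuous_on_compose2[of "ball 0 1" \<rho> "{0..<1}" \<gamma>]) auto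

lemma complete_disk_metric_cong:
  assumes "\<And>z. z \<in> ball 0 1 \<Longrightarrow> \<sigma> z = \<rho> z" and "complete_disk_metric \<sigma>"
  shows "complete_disk_metric \<rho>"
proof -
  have "disk_path_length \<sigma> \<gamma> \<gamma>' = disk_path_length \<rho> \<gamma> \<gamma>'" if "disk_path \<gamma> \<gamma>'" for \<gamma> \<gamma>'
    unfolding disk_path_length_def
    by (intro nn_integral_cong) (use assms(1) disk_path_in_ball[OF that] in \<open>auto split: split_indicator\<close>)
  then show ?thesis
    using assms(2) by (simp add: complete_disk_metric_iff_disk_path)
qed

lemma complete_disk_metric_if_dominated_on_finite_paths:
  assumes \<sigma>: "complete_disk_metric \<sigma>" and \<rho>_cont: "continuous_on (ball 0 1) \<rho>"
    and dominated: "\<And>\<gamma> \<gamma>'. disk_path \<gamma> \<gamma>' \<Longrightarrow> disk_path_length \<rho> \<gamma> \<gamma>' \<noteq> \<infinity> \<Longrightarrow>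
       \<exists>K\<ge>0. \<forall>t\<in>{0..<1}. \<sigma> (\<gamma> t) \<le> K * \<rho> (\<gamma> t)"
  shows "complete_disk_metric \<rho>"
  unfolding complete_disk_metric_iff_disk_path
proof (intro allI impI)
  fix \<gamma> \<gamma>' assume path: "disk_path \<gamma> \<gamma>' \<and> ((\<lambda>t. norm (\<gamma> t)) \<longlongrightarrow> 1) (at_left 1)"
  then have \<gamma>: "disk_path \<gamma> \<gamma>'" ..
  show "disk_path_length \<rho> \<gamma> \<gamma>' = \<infinity>"
  proof (rule ccontr)
    assume fin: "disk_path_length \<rho> \<gamma> \<gamma>' \<noteq> \<infinity>"
    then obtain K where "0 \<le> K" and K: "\<And>t. t \<in> {0..<1} \<Longrightarrow> \<sigma> (\<gamma> t) \<le> K * \<rho> (\<gamma> t)"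
      using dominated[OF \<gamma>] by blast
    have "disk_path_length \<sigma> \<gamma> \<gamma>'
        \<le> (\<integral>\<^sup>+ t. ennreal K * (ennreal (\<rho> (\<gamma> t) * norm (\<gamma>' t)) * indicator {0..<1} t) \<partial>lborel)"
      unfolding disk_path_length_def
    proof (intro nn_integral_mono)
      fix t :: real
      have "ennreal (\<sigma> (\<gamma> t) * norm (\<gamma>' t)) \<le> ennreal (K * (\<rho> (\<gamma> t) * norm (\<gamma>' t)))"
        if "t \<in> {0..<1}"
        using mult_right_mono[OF K[OF that] norm_ge_zero] by (intro ennreal_leI) (simp add: mult.assoc)
      then show "ennreal (\<sigma> (\<gamma> t) * norm (\<gamma>' t)) * indicator {0..<1} t
          \<le> ennreal K * (ennreal (\<rho> (\<gamma> t) * norm (\<gamma>' t)) * indicator {0..<1} t)"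
        using \<open>0 \<le> K\<close> by (auto simp: ennreal_mult' split: split_indicator)
    qed
    also have "\<dots> = ennreal K * disk_path_length \<rho> \<gamma> \<gamma>'"
      unfolding disk_path_length_def
      by (rule nn_integral_cmult[OF borel_measurable_ennreal_indicator_atLeastLessThan
            [OF continuous_on_disk_path_speed[OF \<gamma> \<rho>_cont]]])
    also have "\<dots> < \<infinity>"
      using fin by (simp add: ennreal_mult_eq_top_iff less_top[symmetric])
    finally show False
      using \<sigma> path by (simp add: complete_disk_metric_iff_disk_path)
  qed
qed

lemma integral_le_disk_path_length:
  assumes \<gamma>: "disk_path \<gamma> \<gamma>'" and \<rho>_cont: "continuous_on (ball 0 1) \<rho>"
    and \<rho>_nonneg: "\<And>z. z \<in> ball 0 1 \<Longrightarrow> 0 \<le> \<rho> z"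
    and fin: "disk_path_length \<rho> \<gamma> \<gamma>' \<noteq> \<infinity>" and t: "t \<in> {0..<1}"
  shows "integral {0..t} (\<lambda>s. \<rho> (\<gamma> s) * norm (\<gamma>' s)) \<le> enn2real (disk_path_length \<rho> \<gamma> \<gamma>')"
proof -
  let ?g = "\<lambda>s. \<rho> (\<gamma> s) * norm (\<gamma>' s)"
  have g_cont: "continuous_on {0..<1} ?g"
    by (rule continuous_on_disk_path_speed[OF \<gamma> \<rho>_cont])
  have g_nonneg: "0 \<le> ?g s" if "s \<in> {0..<1}" for s
    using \<rho>_nonneg[OF disk_path_in_ball[OF \<gamma> that]] by simp
  have "ennreal (integral {0..t} ?g) \<le> disk_path_length \<rho> \<gamma> \<gamma>'"
    unfolding disk_path_length_def by (rule integral_le_nn_integral_atLeastLessThan[OF g_cont g_nonneg t])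
  then have "enn2real (ennreal (integral {0..t} ?g)) \<le> enn2real (disk_path_length \<rho> \<gamma> \<gamma>')"
    using fin by (intro enn2real_mono) (simp_all add: less_top)
  moreover have "{0..t} \<subseteq> {0..<1}"
    using t by auto
  then have "0 \<le> integral {0..t} ?g"
    using g_nonneg
    by (intro integral_nonneg integrable_continuous_interval continuous_on_subset[OF g_cont]) auto
  ultimately show ?thesis
    by simp
qed

lemma disk_path_energy_has_derivative_le:
  fixes c d \<omega> \<theta> :: "complex \<Rightarrow> complex" and \<rho> :: "complex \<Rightarrow> real"
  assumes \<gamma>: "disk_path \<gamma> \<gamma>'" and x: "x \<in> {0<..<1}"
    and c: "\<And>z. z \<in> ball 0 1 \<Longrightarrow> (c has_field_derivative d z * \<omega> z) (at z)"
    and d: "\<And>z. z \<in> ball 0 1 \<Longrightarrow> (d has_field_derivative c z * \<theta> z) (at z)"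
    and \<omega>_le: "\<And>z. z \<in> ball 0 1 \<Longrightarrow> cmod (\<omega> z) \<le> \<rho> z"
    and \<theta>_le: "\<And>z. z \<in> ball 0 1 \<Longrightarrow> cmod (\<theta> z) \<le> \<rho> z"
  shows "\<exists>N'. ((\<lambda>s. (cmod (c (\<gamma> s)))\<^sup>2 + (cmod (d (\<gamma> s)))\<^sup>2) has_real_derivative N') (at x) \<and>
    N' \<le> ((cmod (c (\<gamma> x)))\<^sup>2 + (cmod (d (\<gamma> x)))\<^sup>2) * (2 * (\<rho> (\<gamma> x) * norm (\<gamma>' x)))"
proof (intro exI conjI)
  have \<gamma>x: "\<gamma> x \<in> ball 0 1"
    using disk_path_in_ball[OF \<gamma>] x by simp
  define C D where "C = c (\<gamma> x)" and "D = d (\<gamma> x)"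
  define C' D' where "C' = \<gamma>' x * (D * \<omega> (\<gamma> x))" and "D' = \<gamma>' x * (C * \<theta> (\<gamma> x))"
  have "((\<lambda>s. c (\<gamma> s)) has_vector_derivative C') (at x)"
    using field_vector_diff_chain_at[OF disk_path_has_vector_derivative_at[OF \<gamma> x] c[OF \<gamma>x]]
    unfolding C'_def D_def o_def by simp
  moreover have "((\<lambda>s. d (\<gamma> s)) has_vector_derivative D') (at x)"
    using field_vector_diff_chain_at[OF disk_path_has_vector_derivative_at[OF \<gamma> x] d[OF \<gamma>x]]
    unfolding D'_def C_def o_def by simp
  ultimately show "((\<lambda>s. (cmod (c (\<gamma> s)))\<^sup>2 + (cmod (d (\<gamma> s)))\<^sup>2) has_real_derivative
      2 * Re (C' * cnj C) + 2 * Re (D' * cnj D)) (at x)"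
    unfolding C_def D_def by (intro DERIV_add has_real_derivative_cmod_power2)
  have "cmod C' = cmod D * (cmod (\<omega> (\<gamma> x)) * norm (\<gamma>' x))"
    "cmod D' = cmod C * (cmod (\<theta> (\<gamma> x)) * norm (\<gamma>' x))"
    unfolding C'_def D'_def by (simp_all add: norm_mult ac_simps)
  then have "cmod C' \<le> cmod D * (\<rho> (\<gamma> x) * norm (\<gamma>' x))" "cmod D' \<le> cmod C * (\<rho> (\<gamma> x) * norm (\<gamma>' x))"
    using \<omega>_le[OF \<gamma>x] \<theta>_le[OF \<gamma>x] by (auto intro!: mult_left_mono mult_right_mono)
  moreover have "0 \<le> \<rho> (\<gamma> x) * norm (\<gamma>' x)"
    using order_trans[OF norm_ge_zero \<omega>_le[OF \<gamma>x]] by simp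
  ultimately show "2 * Re (C' * cnj C) + 2 * Re (D' * cnj D)
      \<le> ((cmod (c (\<gamma> x)))\<^sup>2 + (cmod (d (\<gamma> x)))\<^sup>2) * (2 * (\<rho> (\<gamma> x) * norm (\<gamma>' x)))"
    unfolding C_def D_def by (intro energy_derivative_bound)
qed

lemma bounded_along_disk_path_of_finite_length:
  fixes c d \<omega> \<theta> :: "complex \<Rightarrow> complex" and \<rho> :: "complex \<Rightarrow> real"
  assumes \<gamma>: "disk_path \<gamma> \<gamma>'"
    and c: "\<And>z. z \<in> ball 0 1 \<Longrightarrow> (c has_field_derivative d z * \<omega> z) (at z)"
    and d: "\<And>z. z \<in> ball 0 1 \<Longrightarrow> (d has_field_derivative c z * \<theta> z) (at z)"
    and \<rho>_cont: "continuous_on (ball 0 1) \<rho>"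
    and \<omega>_le: "\<And>z. z \<in> ball 0 1 \<Longrightarrow> cmod (\<omega> z) \<le> \<rho> z"
    and \<theta>_le: "\<And>z. z \<in> ball 0 1 \<Longrightarrow> cmod (\<theta> z) \<le> \<rho> z"
    and fin: "disk_path_length \<rho> \<gamma> \<gamma>' \<noteq> \<infinity>"
  shows "\<exists>M. \<forall>t\<in>{0..<1}. (cmod (c (\<gamma> t)))\<^sup>2 + (cmod (d (\<gamma> t)))\<^sup>2 \<le> M"
proof -
  define g where "g t = \<rho> (\<gamma> t) * norm (\<gamma>' t)" for t
  define N where "N t = (cmod (c (\<gamma> t)))\<^sup>2 + (cmod (d (\<gamma> t)))\<^sup>2" for t
  define l where "l = enn2real (disk_path_length \<rho> \<gamma> \<gamma>')"
  have \<gamma>_img: "\<gamma> ` {0..<1} \<subseteq> ball 0 1"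
    using disk_path_in_ball[OF \<gamma>] by blast
  have N_cont: "continuous_on {0..<1} N"
  proof -
    have "continuous_on (ball 0 1) c" "continuous_on (ball 0 1) d"
      using c d DERIV_continuous by (blast intro: continuous_at_imp_continuous_on)+
    then have "continuous_on {0..<1} (\<lambda>t. c (\<gamma> t))" "continuous_on {0..<1} (\<lambda>t. d (\<gamma> t))"
      using continuous_on_compose2[OF _ disk_path_continuous_on[OF \<gamma>] \<gamma>_img] by blast+
    then show ?thesis
      unfolding N_def by (intro continuous_intros)
  qed
  have "N t \<le> N 0 * exp (2 * l)" if t: "t \<in> {0..<1}" for t
  proof -
    have sub: "{0..t} \<subseteq> {0..<1}"
      using t by auto
    have "N t \<le> N 0 * exp (integral {0..t} (\<lambda>s. 2 * g s))"
    proof (rule gronwall_inequality)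
      show "0 \<le> t" "continuous_on {0..t} N"
        using t continuous_on_subset[OF N_cont sub] by auto
      show "continuous_on {0..t} (\<lambda>s. 2 * g s)" unfolding g_def
        by (intro continuous_intros continuous_on_subset[OF continuous_on_disk_path_speed[OF \<gamma> \<rho>_cont] sub])
      show "\<exists>N'. (N has_real_derivative N') (at x) \<and> N' \<le> N x * (2 * g x)" if "0 < x" "x < t" for x
        unfolding N_def g_def
        by (rule disk_path_energy_has_derivative_le[OF \<gamma> _ c d \<omega>_le \<theta>_le]) (use that t in auto)
    qed
    also have "\<dots> \<le> N 0 * exp (2 * l)"
      using integral_le_disk_path_length[OF \<gamma> \<rho>_cont _ fin t] order_trans[OF norm_ge_zero \<omega>_le]
      unfolding N_def g_def l_def by (intro mult_left_mono) auto
    finally show ?thesis .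
  qed
  then show ?thesis
    unfolding N_def by blast
qed

lemma complete_disk_metric_if_dominated_by_energy:
  fixes c d \<omega> \<theta> :: "complex \<Rightarrow> complex" and \<rho> \<sigma> :: "complex \<Rightarrow> real"
  assumes \<sigma>: "complete_disk_metric \<sigma>"
    and c: "\<And>z. z \<in> ball 0 1 \<Longrightarrow> (c has_field_derivative d z * \<omega> z) (at z)"
    and d: "\<And>z. z \<in> ball 0 1 \<Longrightarrow> (d has_field_derivative c z * \<theta> z) (at z)"
    and \<rho>_cont: "continuous_on (ball 0 1) \<rho>"
    and \<omega>_le: "\<And>z. z \<in> ball 0 1 \<Longrightarrow> cmod (\<omega> z) \<le> \<rho> z"
    and \<theta>_le: "\<And>z. z \<in> ball 0 1 \<Longrightarrow> cmod (\<theta> z) \<le> \<rho> z"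
    and "0 \<le> K"
    and dominated: "\<And>z M. z \<in> ball 0 1 \<Longrightarrow> (cmod (c z))\<^sup>2 + (cmod (d z))\<^sup>2 \<le> M \<Longrightarrow>
       \<sigma> z \<le> K * M * \<rho> z"
  shows "complete_disk_metric \<rho>"
proof (rule complete_disk_metric_if_dominated_on_finite_paths[OF \<sigma> \<rho>_cont])
  fix \<gamma> \<gamma>' assume \<gamma>: "disk_path \<gamma> \<gamma>'" and "disk_path_length \<rho> \<gamma> \<gamma>' \<noteq> \<infinity>"
  then obtain M where M: "\<And>t. t \<in> {0..<1} \<Longrightarrow> (cmod (c (\<gamma> t)))\<^sup>2 + (cmod (d (\<gamma> t)))\<^sup>2 \<le> M"
    using bounded_along_disk_path_of_finite_length[OF \<gamma> c d \<rho>_cont \<omega>_le \<theta>_le] by blast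
  have "0 \<le> M"
    using M[of 0] by (smt (verit) zero_le_power2 atLeastLessThan_iff zero_less_one)
  then show "\<exists>K'\<ge>0. \<forall>t\<in>{0..<1}. \<sigma> (\<gamma> t) \<le> K' * \<rho> (\<gamma> t)"
    using \<open>0 \<le> K\<close> dominated[OF disk_path_in_ball[OF \<gamma>] M] by (intro exI[of _ "K * M"]) auto
qed

lemma sqrt_sum_squares_le_of_null_bounds:
  fixes x y z t A B M :: real
  assumes "0 \<le> M" "0 \<le> x" "x \<le> 9 * M * A" "0 \<le> t" "t \<le> M * B"
    and "0 \<le> y" "y \<le> t + x" "z\<^sup>2 \<le> x\<^sup>2 + y\<^sup>2"
  shows "sqrt (x\<^sup>2 + y\<^sup>2 + z\<^sup>2) \<le> 23 * M * sqrt (A\<^sup>2 + B\<^sup>2)"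
proof -
  have x2: "x\<^sup>2 \<le> 81 * (M\<^sup>2 * A\<^sup>2)"
    using power_mono[OF \<open>x \<le> 9 * M * A\<close> \<open>0 \<le> x\<close>, of 2] by (simp add: power_mult_distrib)
  have t2: "t\<^sup>2 \<le> M\<^sup>2 * B\<^sup>2"
    using power_mono[OF \<open>t \<le> M * B\<close> \<open>0 \<le> t\<close>, of 2] by (simp add: power_mult_distrib)
  have "y\<^sup>2 \<le> (t + x)\<^sup>2"
    using assms by (intro power_mono) auto
  also have "\<dots> \<le> 2 * t\<^sup>2 + 2 * x\<^sup>2"
    using zero_le_power2[of "t - x"] unfolding power2_sum power2_diff by linarith
  moreover have "0 \<le> M\<^sup>2 * A\<^sup>2" "0 \<le> M\<^sup>2 * B\<^sup>2"
    by simp_all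
  ultimately have "x\<^sup>2 + y\<^sup>2 + z\<^sup>2 \<le> 529 * (M\<^sup>2 * A\<^sup>2) + 529 * (M\<^sup>2 * B\<^sup>2)"
    using assms(8) x2 t2 by linarith
  also have "\<dots> = (23 * M)\<^sup>2 * (A\<^sup>2 + B\<^sup>2)"
    by (simp add: algebra_simps)
  finally have "x\<^sup>2 + y\<^sup>2 + z\<^sup>2 \<le> (23 * M)\<^sup>2 * (A\<^sup>2 + B\<^sup>2)" .
  then have "sqrt (x\<^sup>2 + y\<^sup>2 + z\<^sup>2) \<le> sqrt ((23 * M)\<^sup>2 * (A\<^sup>2 + B\<^sup>2))"
    by (rule real_sqrt_le_mono)
  also have "\<dots> = 23 * M * sqrt (A\<^sup>2 + B\<^sup>2)"
    using \<open>0 \<le> M\<close> by (simp add: real_sqrt_mult)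
  finally show ?thesis .
qed

lemma induced_density_le_lift_density:
  fixes x y w dX dY dZ :: complex
  assumes x: "1 < cmod x" "cmod x < 2" and y: "cmod y < 1/3"
    and null: "dX\<^sup>2 + dY\<^sup>2 + dZ\<^sup>2 = 0"
    and M: "(cmod (x * exp (- w)))\<^sup>2 + (cmod ((1 + x * y) * exp w))\<^sup>2 \<le> M"
  shows "sqrt ((cmod dX)\<^sup>2 + (cmod dY)\<^sup>2 + (cmod dZ)\<^sup>2)
    \<le> 23 * M * sqrt ((cmod (exp (- 2 * w) * dX))\<^sup>2 + (cmod (exp (2 * w) * (dY - y\<^sup>2 * dX)))\<^sup>2)"
proof (rule sqrt_sum_squares_le_of_null_bounds)
  define q where "q = exp (2 * Re w)"
  have "q > 0"
    unfolding q_def by simp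
  have exp_norms: "(cmod (exp w))\<^sup>2 = q" "(cmod (exp (- w)))\<^sup>2 = 1 / q"
    "cmod (exp (2 * w)) = q" "cmod (exp (- 2 * w)) = 1 / q"
    unfolding q_def by (simp_all add: power2_eq_square mult_exp_exp field_simps)
  have M': "(cmod x)\<^sup>2 / q + (cmod (1 + x * y))\<^sup>2 * q \<le> M"
    using M exp_norms by (simp add: norm_mult power_mult_distrib)
  have "1 \<le> (cmod x)\<^sup>2"
    using one_le_power[of "cmod x" 2] x by simp
  then have "1 / q \<le> (cmod x)\<^sup>2 / q"
    using \<open>q > 0\<close> by (simp add: divide_right_mono)
  also have "\<dots> \<le> M"
    using M' \<open>q > 0\<close> by (smt (verit) zero_le_mult_iff zero_le_power2)
  finally have q_ge: "1 / q \<le> M" .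
  have "1 \<le> cmod (1 + x * y) + cmod (x * y)"
    using norm_triangle_ineq4[of "1 + x * y" "x * y"] by simp
  moreover have "cmod (x * y) \<le> 2 * (1/3)"
    unfolding norm_mult using x y by (intro mult_mono) auto
  ultimately have "(1/3)\<^sup>2 \<le> (cmod (1 + x * y))\<^sup>2"
    by (intro power_mono) auto
  then have "q / 9 \<le> (cmod (1 + x * y))\<^sup>2 * q"
    using mult_right_mono[of _ _ q] \<open>q > 0\<close> by (simp add: power2_eq_square)
  also have "\<dots> \<le> M"
    using M' \<open>q > 0\<close> by (smt (verit) divide_nonneg_pos zero_le_power2)
  finally have q_le: "q \<le> 9 * M"
    by simp
  show "0 \<le> M"
    using q_ge \<open>q > 0\<close> by (smt (verit) divide_pos_pos)
  show "cmod dX \<le> 9 * M * cmod (exp (- 2 * w) * dX)"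
    using mult_right_mono[OF q_le, of "cmod dX / q"] \<open>q > 0\<close> exp_norms by (simp add: norm_mult)
  show "cmod (dY - y\<^sup>2 * dX) \<le> M * cmod (exp (2 * w) * (dY - y\<^sup>2 * dX))"
    using mult_right_mono[OF q_ge, of "q * cmod (dY - y\<^sup>2 * dX)"] \<open>q > 0\<close> exp_norms
    by (simp add: norm_mult)
  have "cmod (y\<^sup>2 * dX) \<le> cmod dX"
    using y by (simp add: norm_mult norm_power mult_left_le_one_le power_le_one)
  then show "cmod dY \<le> cmod (dY - y\<^sup>2 * dX) + cmod dX"
    using norm_triangle_ineq[of "dY - y\<^sup>2 * dX" "y\<^sup>2 * dX"] by simp
  have "dZ\<^sup>2 = - (dX\<^sup>2 + dY\<^sup>2)"
    using null by (simp add: eq_neg_iff_add_eq_0 algebra_simps)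
  then show "(cmod dZ)\<^sup>2 \<le> (cmod dX)\<^sup>2 + (cmod dY)\<^sup>2"
    by (metis norm_minus_cancel norm_power norm_triangle_ineq)
qed auto

lemma lift_omega_eq:
  assumes "deriv a z = b z * \<omega>" "deriv c z = d z * \<omega>" "a z * d z - b z * c z \<noteq> 0"
  shows "lift_omega a b c d z = \<omega>"
proof -
  have "a z * (d z * \<omega>) - c z * (b z * \<omega>) = (a z * d z - b z * c z) * \<omega>"
    by (simp add: algebra_simps)
  then show ?thesis
    unfolding lift_omega_def using assms by simp
qed

lemma lift_theta_eq:
  assumes "deriv b z = a z * \<theta>" "deriv d z = c z * \<theta>" "a z * d z - b z * c z \<noteq> 0"
  shows "lift_theta a b c d z = \<theta>"
proof -
  have "d z * (a z * \<theta>) - b z * (c z * \<theta>) = (a z * d z - b z * c z) * \<theta>"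
    by (simp add: algebra_simps)
  then show ?thesis
    unfolding lift_theta_def using assms by simp
qed

lemma weakly_complete_front_if_lift_equation:
  assumes a: "\<And>z. z \<in> ball 0 1 \<Longrightarrow> (a has_field_derivative b z * \<omega> z) (at z)"
    and b: "\<And>z. z \<in> ball 0 1 \<Longrightarrow> (b has_field_derivative a z * \<theta> z) (at z)"
    and c: "\<And>z. z \<in> ball 0 1 \<Longrightarrow> (c has_field_derivative d z * \<omega> z) (at z)"
    and d: "\<And>z. z \<in> ball 0 1 \<Longrightarrow> (d has_field_derivative c z * \<theta> z) (at z)"
    and det: "\<And>z. z \<in> ball 0 1 \<Longrightarrow> a z * d z - b z * c z \<noteq> 0"
    and complete: "complete_disk_metric (\<lambda>z. sqrt ((cmod (\<omega> z))\<^sup>2 + (cmod (\<theta> z))\<^sup>2))"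
  shows "weakly_complete_front a b c d"
  unfolding weakly_complete_front_def
proof (rule complete_disk_metric_cong[OF _ complete])
  fix z :: complex assume z: "z \<in> ball 0 1"
  have "lift_omega a b c d z = \<omega> z" "lift_theta a b c d z = \<theta> z"
    by (intro lift_omega_eq lift_theta_eq DERIV_imp_deriv a b c d det z)+
  then show "sqrt ((cmod (\<omega> z))\<^sup>2 + (cmod (\<theta> z))\<^sup>2)
      = sqrt ((cmod (lift_omega a b c d z))\<^sup>2 + (cmod (lift_theta a b c d z))\<^sup>2)"
    by simp
qed

text \<open>Entrywise form of L' = L (0 \<theta>; \<omega> 0) for the lift L = (a b; c d).\<close>
lemma legendrian_lift_has_field_derivative:
  fixes X Y W :: "complex \<Rightarrow> complex"
  assumes X: "(X has_field_derivative X') (at z)" and Y: "(Y has_field_derivative Y') (at z)"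
    and W: "(W has_field_derivative - Y z * X') (at z)"
  defines "\<omega> \<equiv> exp (- 2 * W z) * X'" and "\<theta> \<equiv> exp (2 * W z) * (Y' - (Y z)\<^sup>2 * X')"
  shows "((\<lambda>z. exp (- W z)) has_field_derivative Y z * exp (W z) * \<omega>) (at z)"
    and "((\<lambda>z. Y z * exp (W z)) has_field_derivative exp (- W z) * \<theta>) (at z)"
    and "((\<lambda>z. X z * exp (- W z)) has_field_derivative (1 + X z * Y z) * exp (W z) * \<omega>) (at z)"
    and "((\<lambda>z. (1 + X z * Y z) * exp (W z)) has_field_derivative X z * exp (- W z) * \<theta>) (at z)"
proof -
  have exp_W: "exp (- W z) = inverse (exp (W z))" "exp (- 2 * W z) = (inverse (exp (W z)))\<^sup>2"
    "exp (2 * W z) = (exp (W z))\<^sup>2"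
    by (simp_all add: exp_minus exp_double power_inverse)
  show "((\<lambda>z. exp (- W z)) has_field_derivative Y z * exp (W z) * \<omega>) (at z)"
    using W unfolding \<omega>_def exp_W
    by (auto intro!: derivative_eq_intros simp: exp_minus field_simps power2_eq_square)
  show "((\<lambda>z. Y z * exp (W z)) has_field_derivative exp (- W z) * \<theta>) (at z)"
    using Y W unfolding \<theta>_def exp_W
    by (auto intro!: derivative_eq_intros simp: exp_minus field_simps power2_eq_square)
  show "((\<lambda>z. X z * exp (- W z)) has_field_derivative (1 + X z * Y z) * exp (W z) * \<omega>) (at z)"
    using X W unfolding \<omega>_def exp_W
    by (auto intro!: derivative_eq_intros simp: exp_minus field_simps power2_eq_square)
  show "((\<lambda>z. (1 + X z * Y z) * exp (W z)) has_field_derivative X z * exp (- W z) * \<theta>) (at z)"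
    using X Y W unfolding \<theta>_def exp_W
    by (auto intro!: derivative_eq_intros simp: exp_minus field_simps power2_eq_square)
qed

theorem proposition2p4:
  fixes X Y Z W :: "complex \<Rightarrow> complex"
  assumes holo: "holo_map3 X Y Z"
    and null: "null_map3 X Y Z"
    and imm: "immersion_map3 X Y Z"
    and bdd: "bounded ((\<lambda>z. (X z, Y z, Z z)) ` ball 0 1)"
    and compl: "complete_disk_metric (induced_density3 X Y Z)"
    and hX: "\<forall>z\<in>ball 0 1. 1 < cmod (X z) \<and> cmod (X z) < 2"
    and hY: "\<forall>z\<in>ball 0 1. cmod (Y z) < 1/3"
    and W_holo: "W holomorphic_on ball 0 1"
    and W0: "W 0 = 0"
    and W_deriv: "\<forall>z\<in>ball 0 1. deriv W z = - Y z * deriv X z"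
  shows "complete_disk_metric (\<lambda>z. sqrt ((cmod (exp (-2 * W z) * deriv X z))\<^sup>2
             + (cmod (exp (2 * W z) * (deriv Y z - (Y z)\<^sup>2 * deriv X z)))\<^sup>2))
       \<and> weakly_complete_front (\<lambda>z. exp (- W z)) (\<lambda>z. Y z * exp (W z))
            (\<lambda>z. X z * exp (- W z)) (\<lambda>z. (1 + X z * Y z) * exp (W z))"
proof -
  define \<omega> where "\<omega> z = exp (-2 * W z) * deriv X z" for z
  define \<theta> where "\<theta> z = exp (2 * W z) * (deriv Y z - (Y z)\<^sup>2 * deriv X z)" for z
  define \<rho> where "\<rho> z = sqrt ((cmod (\<omega> z))\<^sup>2 + (cmod (\<theta> z))\<^sup>2)" for z
  define a b c d where "a z = exp (- W z)" and "b z = Y z * exp (W z)"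
    and "c z = X z * exp (- W z)" and "d z = (1 + X z * Y z) * exp (W z)" for z
  have X_holo: "X holomorphic_on ball 0 1" and Y_holo: "Y holomorphic_on ball 0 1"
    using holo unfolding holo_map3_def by auto
  have "(a has_field_derivative b z * \<omega> z) (at z)" "(b has_field_derivative a z * \<theta> z) (at z)"
    "(c has_field_derivative d z * \<omega> z) (at z)" "(d has_field_derivative c z * \<theta> z) (at z)"
    if z: "z \<in> ball 0 1" for z
    using legendrian_lift_has_field_derivative[OF holomorphic_derivI[OF X_holo open_ball z]
        holomorphic_derivI[OF Y_holo open_ball z], of W]
      holomorphic_derivI[OF W_holo open_ball z] W_deriv z
    unfolding a_def[abs_def] b_def[abs_def] c_def[abs_def] d_def[abs_def] \<omega>_def \<theta>_def by auto
  note lift_deriv = this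
  have \<rho>_cont: "continuous_on (ball 0 1) \<rho>"
    unfolding \<rho>_def \<omega>_def \<theta>_def using X_holo Y_holo W_holo
    by (intro continuous_intros holomorphic_on_imp_continuous_on holomorphic_deriv) auto
  have "induced_density3 X Y Z z \<le> 23 * M * \<rho> z"
    if "z \<in> ball 0 1" "(cmod (c z))\<^sup>2 + (cmod (d z))\<^sup>2 \<le> M" for z M
    using induced_density_le_lift_density[of "X z" "Y z"] that hX hY null
    unfolding induced_density3_def null_map3_def \<rho>_def \<omega>_def \<theta>_def c_def d_def by simp
  then have "complete_disk_metric \<rho>"
    by (intro complete_disk_metric_if_dominated_by_energy[where K = 23, OF compl lift_deriv(3,4) \<rho>_cont])
      (auto simp: \<rho>_def real_le_rsqrt)
  moreover have "weakly_complete_front a b c d"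
    using \<open>complete_disk_metric \<rho>\<close> unfolding \<rho>_def
    by (intro weakly_complete_front_if_lift_equation[OF lift_deriv])
      (auto simp: a_def b_def c_def d_def exp_minus field_simps)
  ultimately show ?thesis
    unfolding \<rho>_def \<omega>_def \<theta>_def a_def[abs_def] b_def[abs_def] c_def[abs_def] d_def[abs_def] ..
qed

end
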